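(* Let $B$ be a ring, $\phi\in\operatorname{Aut}B$, $\delta:=\phi-\mathrm{id}$, and $\operatorname{pl}(\phi):=\delta(B)\cap B^{\phi}$. (i) If $a\in\operatorname{pl}(\phi)$ is not a zero-divisor of $B$ and $\delta(B)\subset aB$, then $\operatorname{pl}(\phi)=aB^{\phi}$. (ii) Suppose $B$ is a UFD and $\operatorname{pl}(\phi)$ is a principal ideal of $B^{\phi}$. If $a,b\in\operatorname{pl}(\phi)\setminus\{0\}$ and a greatest common divisor $c$ of $a$ and $b$ lies in $B^{\phi}$, then $c\in\operatorname{pl}(\phi)$.
   Context: $B^{\phi}:=\{u\in B\mid\phi(u)=u\}$; $\operatorname{pl}(\phi)$ is an ideal of $B^{\phi}$ (the plinth ideal). *)

theory Defs
  imports "HOL-Computational_Algebra.Factorial_Ring"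
begin

definition ring_aut :: "('a::comm_ring_1 \<Rightarrow> 'a) \<Rightarrow> bool" where
  "ring_aut \<phi> \<longleftrightarrow> bij \<phi> \<and> \<phi> 1 = 1 \<and>
     (\<forall>x y. \<phi> (x + y) = \<phi> x + \<phi> y) \<and> (\<forall>x y. \<phi> (x * y) = \<phi> x * \<phi> y)"

definition fixring :: "('a \<Rightarrow> 'a) \<Rightarrow> 'a set" where
  "fixring \<phi> = {u. \<phi> u = u}"

definition delta :: "('a::ab_group_add \<Rightarrow> 'a) \<Rightarrow> 'a \<Rightarrow> 'a" where
  "delta \<phi> u = \<phi> u - u"

definition plinth :: "('a::ab_group_add \<Rightarrow> 'a) \<Rightarrow> 'a set" where
  "plinth \<phi> = range (delta \<phi>) \<inter> fixring \<phi>"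

definition is_gcd_of :: "'a::comm_semiring_1 \<Rightarrow> 'a \<Rightarrow> 'a \<Rightarrow> bool" where
  "is_gcd_of c a b \<longleftrightarrow> c dvd a \<and> c dvd b \<and> (\<forall>d. d dvd a \<and> d dvd b \<longrightarrow> d dvd c)"

end

theory Submission
  imports Defs
begin

(* Both parts rest on one cancellation: if a is a fixed non-zero-divisor and a z is fixed,
   then a (phi z - z) = 0 forces z to be fixed.  For (i), every element of pl(phi) has the
   form a z because delta(B) is contained in aB, so it lies in a B^phi; conversely
   a u = delta(y u) whenever a = delta(y) and u is fixed.  For (ii), the generator p of
   pl(phi) divides a and b, hence their gcd c = p w, and w is fixed by cancellation; only
   the universal property of the gcd is used, not unique factorisation. *)

lemma ring_aut_mult:
  assumes "ring_aut \<phi>"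
  shows "\<phi> (x * y) = \<phi> x * \<phi> y"
  using assms unfolding ring_aut_def by blast

lemma fixring_mult:
  assumes "ring_aut \<phi>" "u \<in> fixring \<phi>" "v \<in> fixring \<phi>"
  shows "u * v \<in> fixring \<phi>"
  using assms by (simp add: fixring_def ring_aut_mult)

lemma delta_mult_fixed:
  assumes "ring_aut \<phi>" "u \<in> fixring \<phi>"
  shows "delta \<phi> (y * u) = delta \<phi> y * u"
  using assms by (simp add: delta_def fixring_def ring_aut_mult algebra_simps)

lemma plinth_mult_fixring:
  assumes "ring_aut \<phi>" "a \<in> plinth \<phi>" "u \<in> fixring \<phi>"
  shows "a * u \<in> plinth \<phi>"
proof -
  obtain y where "a = delta \<phi> y" and "a \<in> fixring \<phi>"
    using assms(2) unfolding plinth_def by auto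
  then have "a * u = delta \<phi> (y * u)" and "a * u \<in> fixring \<phi>"
    using assms by (simp_all add: delta_mult_fixed fixring_mult)
  then show ?thesis
    unfolding plinth_def by auto
qed

lemma fixring_cancel_left:
  assumes "ring_aut \<phi>" "a \<in> fixring \<phi>" "\<forall>x. a * x = 0 \<longrightarrow> x = 0"
    and "a * z \<in> fixring \<phi>"
  shows "z \<in> fixring \<phi>"
proof -
  have "a * (\<phi> z - z) = 0"
    using assms by (simp add: fixring_def ring_aut_mult algebra_simps)
  then have "\<phi> z - z = 0"
    using assms(3) by blast
  then show ?thesis
    by (simp add: fixring_def)
qed

lemma plinth_eq_fixring_multiples:
  assumes aut: "ring_aut \<phi>" and a: "a \<in> plinth \<phi>"
    and regular: "\<forall>x. a * x = 0 \<longrightarrow> x = 0"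
    and delta_range: "range (delta \<phi>) \<subseteq> {a * x | x. True}"
  shows "plinth \<phi> = {a * u | u. u \<in> fixring \<phi>}"
proof (intro set_eqI iffI)
  fix x assume x: "x \<in> plinth \<phi>"
  then obtain z where "x = a * z"
    using delta_range unfolding plinth_def by blast
  moreover have "z \<in> fixring \<phi>"
    using fixring_cancel_left[OF aut _ regular] a x \<open>x = a * z\<close>
    unfolding plinth_def by blast
  ultimately show "x \<in> {a * u | u. u \<in> fixring \<phi>}" by blast
next
  fix x assume "x \<in> {a * u | u. u \<in> fixring \<phi>}"
  then show "x \<in> plinth \<phi>"
    using plinth_mult_fixring[OF aut a] by blast
qed

lemma gcd_mem_principal_plinth:
  fixes \<phi> :: "'a::idom \<Rightarrow> 'a"
  assumes aut: "ring_aut \<phi>" and p: "p \<in> fixring \<phi>"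
    and principal: "plinth \<phi> = {p * u | u. u \<in> fixring \<phi>}"
    and a: "a \<in> plinth \<phi> - {0}" and b: "b \<in> plinth \<phi>"
    and gcd: "is_gcd_of c a b" and c: "c \<in> fixring \<phi>"
  shows "c \<in> plinth \<phi>"
proof -
  have "p dvd a" "p dvd b" "p \<noteq> 0"
    using a b unfolding principal by auto
  then obtain w where cw: "c = p * w"
    using gcd unfolding is_gcd_of_def by blast
  have "w \<in> fixring \<phi>"
    using fixring_cancel_left[OF aut p] \<open>p \<noteq> 0\<close> c cw by simp
  then show ?thesis
    unfolding principal cw by blast
qed

theorem lemma2p6:
  fixes \<phi> :: "'a::comm_ring_1 \<Rightarrow> 'a" and \<psi> :: "'b::{factorial_semiring,idom} \<Rightarrow> 'b"
  shows "(\<forall>a. ring_aut \<phi> \<longrightarrow> a \<in> plinth \<phi> \<longrightarrow> (\<forall>x. a * x = 0 \<longrightarrow> x = 0)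
            \<longrightarrow> range (delta \<phi>) \<subseteq> {a * x | x. True}
            \<longrightarrow> plinth \<phi> = {a * u | u. u \<in> fixring \<phi>})
       \<and> (\<forall>a b c. ring_aut \<psi>
            \<longrightarrow> (\<exists>p\<in>fixring \<psi>. plinth \<psi> = {p * u | u. u \<in> fixring \<psi>})
            \<longrightarrow> a \<in> plinth \<psi> - {0} \<longrightarrow> b \<in> plinth \<psi> - {0}
            \<longrightarrow> is_gcd_of c a b \<longrightarrow> c \<in> fixring \<psi>
            \<longrightarrow> c \<in> plinth \<psi>)"
proof (intro conjI allI impI)
  fix a
  assume "ring_aut \<phi>" "a \<in> plinth \<phi>" "\<forall>x. a * x = 0 \<longrightarrow> x = 0"
    "range (delta \<phi>) \<subseteq> {a * x | x. True}"
  then show "plinth \<phi> = {a * u | u. u \<in> fixring \<phi>}"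
    by (rule plinth_eq_fixring_multiples)
next
  fix a b c
  assume "ring_aut \<psi>" "\<exists>p\<in>fixring \<psi>. plinth \<psi> = {p * u | u. u \<in> fixring \<psi>}"
    "a \<in> plinth \<psi> - {0}" "b \<in> plinth \<psi> - {0}" "is_gcd_of c a b" "c \<in> fixring \<psi>"
  then show "c \<in> plinth \<psi>"
    using gcd_mem_principal_plinth by blast
qed

end
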